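(* Let $\Pi$ be a $3$-decomposable $30$-half-period with classes $A,B,C$. Then $N_k^{bi}(\Pi)=3k$ for $k=1,2,\dots,10$.
   Context: An allowable sequence on an $n$-element set is a doubly infinite sequence of permutations of the set (lists on positions $1,\dots,n$) in which consecutive permutations differ by swapping two adjacent elements (a transposition) and $\pi_{i+\binom n2}$ is the reverse of $\pi_i$; an $n$-half-period is a block $(\pi_0,\dots,\pi_{\binom n2})$ of consecutive permutations (each pair of elements is swapped exactly once in it). A transposition swapping the elements in positions $i,i+1$ is an $i$-transposition; for $1\le k\le n/2$ it is $k$-critical if it is a $k$-transposition or an $(n-k)$-transposition. An $n$-half-period $\Pi$ ($3\mid n$) is $3$-decomposable if its elements can be labeled $A=\{a_1,\dots,a_{n/3}\}$, $B=\{b_1,\dots,b_{n/3}\}$, $C=\{c_1,\dots,c_{n/3}\}$ so that its first permutation is $(a_{n/3},\dots,a_1,b_1,\dots,b_{n/3},c_1,\dots,c_{n/3})$, every transposition between an element of $A$ and an element of $B$ occurs before every transposition between an element of $C$ and an element of $A\cup B$, and every transposition between $A$ and $C$ occurs before every transposition between $B$ and $C$. A transposition is bichromatic if its two elements lie in different classes among $A,B,C$, and monochromatic otherwise. $N_k^{bi}(\Pi)$ is the number of bichromatic $k$-critical transpositions of $\Pi$. *)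

theory Defs
  imports Main
begin

text \<open>A permutation of an n-element set is a list of its n distinct elements
  (positions 1..n). The j-transposition (1 <= j < n) swaps the elements at
  positions j and j+1, i.e. at list indices j-1 and j.\<close>

definition adj_swap :: "'a list \<Rightarrow> nat \<Rightarrow> 'a list" where
  "adj_swap xs j = xs[j - 1 := xs ! j, j := xs ! (j - 1)]"

definition trans_pos :: "'a list list \<Rightarrow> nat \<Rightarrow> nat" where
  "trans_pos ps i = (THE j. 1 \<le> j \<and> j < length (ps ! i) \<and> ps ! Suc i = adj_swap (ps ! i) j)"

definition trans_elems :: "'a list list \<Rightarrow> nat \<Rightarrow> 'a set" where
  "trans_elems ps i = {ps ! i ! (trans_pos ps i - 1), ps ! i ! trans_pos ps i}"

definition half_period :: "nat \<Rightarrow> 'a list list \<Rightarrow> bool" where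
  "half_period n ps \<longleftrightarrow>
     length ps = (n choose 2) + 1 \<and>
     (\<forall>i < length ps. distinct (ps ! i) \<and> length (ps ! i) = n \<and> set (ps ! i) = set (ps ! 0)) \<and>
     (\<forall>i < n choose 2. \<exists>j. 1 \<le> j \<and> j < n \<and> ps ! Suc i = adj_swap (ps ! i) j) \<and>
     (\<forall>x \<in> set (ps ! 0). \<forall>y \<in> set (ps ! 0). x \<noteq> y \<longrightarrow>
        card {i. i < n choose 2 \<and> trans_elems ps i = {x, y}} = 1)"

definition k_critical :: "nat \<Rightarrow> nat \<Rightarrow> 'a list list \<Rightarrow> nat \<Rightarrow> bool" where
  "k_critical n k ps i \<longleftrightarrow> trans_pos ps i = k \<or> trans_pos ps i = n - k"

definition between :: "'a set \<Rightarrow> 'a set \<Rightarrow> 'a list list \<Rightarrow> nat \<Rightarrow> bool" where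
  "between X Y ps i \<longleftrightarrow> (\<exists>x\<in>X. \<exists>y\<in>Y. trans_elems ps i = {x, y})"

definition three_decomposable :: "nat \<Rightarrow> 'a list list \<Rightarrow> 'a set \<Rightarrow> 'a set \<Rightarrow> 'a set \<Rightarrow> bool" where
  "three_decomposable n ps A B C \<longleftrightarrow>
     half_period n ps \<and> 3 dvd n \<and>
     (\<exists>a b c :: nat \<Rightarrow> 'a.
        A = a ` {1..n div 3} \<and> B = b ` {1..n div 3} \<and> C = c ` {1..n div 3} \<and>
        ps ! 0 = rev (map a [1..<n div 3 + 1]) @ map b [1..<n div 3 + 1] @ map c [1..<n div 3 + 1]) \<and>
     (\<forall>i < n choose 2. \<forall>i' < n choose 2.
        between A B ps i \<and> between C (A \<union> B) ps i' \<longrightarrow> i < i') \<and>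
     (\<forall>i < n choose 2. \<forall>i' < n choose 2.
        between A C ps i \<and> between B C ps i' \<longrightarrow> i < i')"

definition bichromatic :: "'a set \<Rightarrow> 'a set \<Rightarrow> 'a set \<Rightarrow> 'a list list \<Rightarrow> nat \<Rightarrow> bool" where
  "bichromatic A B C ps i \<longleftrightarrow>
     \<not> (trans_elems ps i \<subseteq> A \<or> trans_elems ps i \<subseteq> B \<or> trans_elems ps i \<subseteq> C)"

definition N_bi :: "nat \<Rightarrow> nat \<Rightarrow> 'a set \<Rightarrow> 'a set \<Rightarrow> 'a set \<Rightarrow> 'a list list \<Rightarrow> nat" where
  "N_bi n k A B C ps = card {i. i < n choose 2 \<and> k_critical n k ps i \<and> bichromatic A B C ps i}"

end

theory Submission
  imports Defs "HOL-Combinatorics.Transposition"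
begin

text \<open>Every pair is swapped exactly once, so the left element of a transposition stood to the left
  of the right one in the initial permutation A B C, and the final permutation is the reverse of
  the initial one. Number the blocks A, B, C by 0, 1, 2 and let m = n/3. Over the half-period the
  sum of the block numbers in the first k positions grows from 0 to 2k, and only k-transpositions
  change it, each by the block difference of the swapped pair. Likewise the number of C-elements in
  the first n - k positions grows from m - k to m, changing only at (n-k)-transpositions. The
  ordering of the 3-decomposition forbids A-C swaps at position k and A-B swaps at position n - k,
  so each bichromatic critical transposition contributes exactly 1, giving 2k + k.\<close>

definition index_of :: "'a list \<Rightarrow> 'a \<Rightarrow> nat" where
  "index_of xs x = (THE j. j < length xs \<and> xs ! j = x)"

lemma index_of_nth: "distinct xs \<Longrightarrow> j < length xs \<Longrightarrow> index_of xs (xs ! j) = j"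
  unfolding index_of_def by (rule the_equality) (auto simp: nth_eq_iff_index_eq)

lemma index_of_less_length: "distinct xs \<Longrightarrow> x \<in> set xs \<Longrightarrow> index_of xs x < length xs"
  by (metis in_set_conv_nth index_of_nth)

lemma nth_index_of: "distinct xs \<Longrightarrow> x \<in> set xs \<Longrightarrow> xs ! index_of xs x = x"
  by (metis in_set_conv_nth index_of_nth)

lemma inj_on_index_of: "distinct xs \<Longrightarrow> inj_on (index_of xs) (set xs)"
  by (metis inj_onI nth_index_of)

lemma card_le_index_of:
  assumes "distinct xs" "Y \<subseteq> set xs" "\<forall>y\<in>Y. index_of xs y < index_of xs x"
  shows "card Y \<le> index_of xs x"
proof -
  have "card Y = card (index_of xs ` Y)"
    using inj_on_subset[OF inj_on_index_of assms(2)] assms(1) by (simp add: card_image)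
  also have "\<dots> \<le> card {..<index_of xs x}"
    using assms(3) by (intro card_mono) auto
  finally show ?thesis by simp
qed

lemma card_add_index_of_less:
  assumes "distinct xs" "x \<in> set xs" "Y \<subseteq> set xs" "\<forall>y\<in>Y. index_of xs x < index_of xs y"
  shows "card Y + index_of xs x < length xs"
proof -
  have "card Y = card (index_of xs ` Y)"
    using inj_on_subset[OF inj_on_index_of assms(3)] assms(1) by (simp add: card_image)
  also have "\<dots> \<le> card {index_of xs x<..<length xs}"
    using assms(1,3,4) index_of_less_length by (intro card_mono) fastforce+
  finally show ?thesis
    using index_of_less_length[OF assms(1,2)] by simp
qed

lemma length_adj_swap [simp]: "length (adj_swap xs q) = length xs"
  by (simp add: adj_swap_def)

lemma nth_adj_swap:
  "1 \<le> q \<Longrightarrow> q < length xs \<Longrightarrow> j < length xs \<Longrightarrow> adj_swap xs q ! j = xs ! transpose (q - 1) q j"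
  by (auto simp: adj_swap_def nth_list_update transpose_def)

lemma distinct_adj_swap: "1 \<le> q \<Longrightarrow> q < length xs \<Longrightarrow> distinct (adj_swap xs q) = distinct xs"
  unfolding adj_swap_def by (rule distinct_swap) auto

lemma adj_swap_inject:
  assumes "distinct xs" "1 \<le> q" "q < length xs" "1 \<le> q'" "q' < length xs"
    and "adj_swap xs q = adj_swap xs q'"
  shows "q = q'"
proof -
  let ?t = "transpose (q' - 1) q' (q - 1)"
  have t: "?t < length xs"
    using assms(2-5) by (auto simp: transpose_def)
  have "xs ! q = xs ! ?t"
    using arg_cong[OF assms(6), of "\<lambda>ys. ys ! (q - 1)"] assms(2-5) by (simp add: nth_adj_swap)
  then have "q = ?t"
    using assms(1,3) t by (simp add: nth_eq_iff_index_eq)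
  then show ?thesis
    using assms(2,4) by (auto simp: transpose_def split: if_splits)
qed

lemma index_of_adj_swap:
  assumes "distinct xs" "1 \<le> q" "q < length xs" "z \<in> set xs"
  shows "index_of (adj_swap xs q) z = transpose (q - 1) q (index_of xs z)"
proof -
  let ?j = "transpose (q - 1) q (index_of xs z)"
  have j: "?j < length xs"
    using index_of_less_length[OF assms(1,4)] assms(3) by (auto simp: transpose_def)
  have "adj_swap xs q ! ?j = z"
    using assms j by (simp add: nth_adj_swap nth_index_of)
  then show ?thesis
    using index_of_nth[of "adj_swap xs q" ?j] j assms by (simp add: distinct_adj_swap)
qed

lemma transpose_adjacent_less_iff:
  "u \<noteq> v \<Longrightarrow> (transpose a (Suc a) u < transpose a (Suc a) v) = ((u < v) \<noteq> ({u, v} = {a, Suc a}))"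
  by (auto simp: transpose_def doubleton_eq_iff)

lemma index_of_adj_swap_less_iff:
  assumes "distinct xs" "1 \<le> q" "q < length xs" "x \<in> set xs" "y \<in> set xs" "x \<noteq> y"
  shows "(index_of (adj_swap xs q) x < index_of (adj_swap xs q) y) =
    ((index_of xs x < index_of xs y) \<noteq> ({xs ! (q - 1), xs ! q} = {x, y}))"
proof -
  obtain q0 where q0: "q = Suc q0" using assms(2) by (cases q) auto
  let ?ix = "index_of xs x" and ?iy = "index_of xs y"
  have ix: "?ix < length xs" "?iy < length xs" "x = xs ! ?ix" "y = xs ! ?iy"
    using assms index_of_less_length nth_index_of by metis+
  have ne: "?ix \<noteq> ?iy"
    using assms(6) ix by metis
  have "({?ix, ?iy} = {q0, Suc q0}) = ({xs ! q0, xs ! Suc q0} = {x, y})"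
    using assms(1,3) ix q0 by (auto simp: doubleton_eq_iff nth_eq_iff_index_eq)
  then show ?thesis
    using transpose_adjacent_less_iff[OF ne, of q0] assms q0 by (simp add: index_of_adj_swap)
qed

lemma sum_prefix_adj_swap:
  fixes w :: "'a \<Rightarrow> 'b::ab_group_add"
  assumes "1 \<le> q" "q < length xs" "p \<le> length xs"
  shows "(\<Sum>j<p. w (adj_swap xs q ! j)) =
    (\<Sum>j<p. w (xs ! j)) + (if q = p then w (xs ! q) - w (xs ! (q - 1)) else 0)"
proof (cases "q = p")
  case True
  obtain q0 where q0: "q = Suc q0" using assms(1) by (cases q) auto
  have "(\<Sum>j<q0. w (adj_swap xs q ! j)) = (\<Sum>j<q0. w (xs ! j))"
    using assms q0 by (intro sum.cong) (auto simp: nth_adj_swap)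
  moreover have "adj_swap xs q ! q0 = xs ! q"
    using assms q0 by (simp add: nth_adj_swap)
  moreover have "p = Suc q0" using True q0 by simp
  ultimately show ?thesis
    using q0 by simp
next
  case False
  have "(\<Sum>j<p. w (adj_swap xs q ! j)) = (\<Sum>j<p. w (xs ! transpose (q - 1) q j))"
    using assms by (intro sum.cong) (auto simp: nth_adj_swap)
  also have "\<dots> = (\<Sum>j\<in>transpose (q - 1) q ` {..<p}. w (xs ! j))"
    by (simp add: sum.reindex)
  also have "transpose (q - 1) q ` {..<p} = {..<p}"
    using False assms(1) by (intro transpose_image_eq) auto
  finally show ?thesis using False by simp
qed

locale half_period_seq =
  fixes n :: nat and ps :: "'a list list"
  assumes half_period: "half_period n ps"
begin

abbreviation N :: nat where "N \<equiv> n choose 2"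

abbreviation ground :: "'a set" where "ground \<equiv> set (ps ! 0)"

definition left_elem :: "nat \<Rightarrow> 'a" where
  "left_elem i = ps ! i ! (trans_pos ps i - 1)"

definition right_elem :: "nat \<Rightarrow> 'a" where
  "right_elem i = ps ! i ! trans_pos ps i"

lemma perm_at:
  assumes "i \<le> N"
  shows "distinct (ps ! i)" "length (ps ! i) = n" "set (ps ! i) = ground"
proof -
  have "length ps = N + 1"
    using half_period unfolding half_period_def by (rule conjunct1)
  moreover have "\<forall>i < length ps. distinct (ps ! i) \<and> length (ps ! i) = n \<and> set (ps ! i) = ground"
    using half_period unfolding half_period_def by (elim conjE)
  moreover have "i < length ps"
    using assms calculation(1) by simp
  ultimately show "distinct (ps ! i)" "length (ps ! i) = n" "set (ps ! i) = ground"
    by blast+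
qed

lemma nth_in_ground: "i \<le> N \<Longrightarrow> j < n \<Longrightarrow> ps ! i ! j \<in> ground"
  using perm_at(2,3)[of i] nth_mem[of j "ps ! i"] by simp

lemma trans_pos_step:
  assumes "i < N"
  shows "1 \<le> trans_pos ps i" "trans_pos ps i < n" "ps ! Suc i = adj_swap (ps ! i) (trans_pos ps i)"
proof -
  obtain j where j: "1 \<le> j" "j < n" "ps ! Suc i = adj_swap (ps ! i) j"
    using half_period assms unfolding half_period_def by blast
  have "trans_pos ps i = j"
    unfolding trans_pos_def
  proof (rule the_equality)
    show "1 \<le> j \<and> j < length (ps ! i) \<and> ps ! Suc i = adj_swap (ps ! i) j"
      using j perm_at(2)[of i] assms by simp
    show "j' = j" if "1 \<le> j' \<and> j' < length (ps ! i) \<and> ps ! Suc i = adj_swap (ps ! i) j'" for j'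
      using that j perm_at[of i] assms adj_swap_inject[of "ps ! i" j' j] by auto
  qed
  then show "1 \<le> trans_pos ps i" "trans_pos ps i < n" "ps ! Suc i = adj_swap (ps ! i) (trans_pos ps i)"
    using j by simp_all
qed

lemma trans_elems_eq: "trans_elems ps i = {left_elem i, right_elem i}"
  by (simp add: trans_elems_def left_elem_def right_elem_def)

lemma
  assumes "i < N"
  shows left_elem_in_ground: "left_elem i \<in> ground"
    and right_elem_in_ground: "right_elem i \<in> ground"
    and index_of_left_elem: "index_of (ps ! i) (left_elem i) = trans_pos ps i - 1"
    and index_of_right_elem: "index_of (ps ! i) (right_elem i) = trans_pos ps i"
proof -
  have i: "i \<le> N" using assms by simp
  have q: "trans_pos ps i - 1 < length (ps ! i)" "trans_pos ps i < length (ps ! i)"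
    using trans_pos_step[OF assms] perm_at(2)[OF i] by auto
  show "left_elem i \<in> ground" "right_elem i \<in> ground"
    unfolding left_elem_def right_elem_def perm_at(3)[OF i, symmetric] using q by simp_all
  show "index_of (ps ! i) (left_elem i) = trans_pos ps i - 1"
    "index_of (ps ! i) (right_elem i) = trans_pos ps i"
    unfolding left_elem_def right_elem_def using q index_of_nth[OF perm_at(1)[OF i]] by simp_all
qed

lemma ex1_swap_time:
  assumes "x \<in> ground" "y \<in> ground" "x \<noteq> y"
  shows "\<exists>!s. s < N \<and> trans_elems ps s = {x, y}"
proof -
  have "\<forall>x \<in> ground. \<forall>y \<in> ground. x \<noteq> y \<longrightarrow> card {s. s < N \<and> trans_elems ps s = {x, y}} = 1"
    using half_period unfolding half_period_def by (elim conjE)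
  then have "card {s. s < N \<and> trans_elems ps s = {x, y}} = 1"
    using assms by blast
  then obtain s where "{s. s < N \<and> trans_elems ps s = {x, y}} = {s}"
    by (rule card_1_singletonE)
  then show ?thesis
    by (metis (mono_tags, lifting) mem_Collect_eq singletonD singletonI)
qed

definition swap_time :: "'a \<Rightarrow> 'a \<Rightarrow> nat" where
  "swap_time x y = (THE s. s < N \<and> trans_elems ps s = {x, y})"

lemma swap_time:
  assumes "x \<in> ground" "y \<in> ground" "x \<noteq> y"
  shows "swap_time x y < N" "trans_elems ps (swap_time x y) = {x, y}"
  using theI'[OF ex1_swap_time[OF assms]] unfolding swap_time_def by auto

lemma swap_time_unique:
  assumes "x \<in> ground" "y \<in> ground" "x \<noteq> y" "s < N" "trans_elems ps s = {x, y}"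
  shows "swap_time x y = s"
  using ex1_swap_time[OF assms(1-3)] swap_time[OF assms(1-3)] assms(4,5) by blast

lemma index_of_step_less_iff:
  assumes "i < N" "x \<in> ground" "y \<in> ground" "x \<noteq> y"
  shows "(index_of (ps ! Suc i) x < index_of (ps ! Suc i) y) =
    ((index_of (ps ! i) x < index_of (ps ! i) y) \<noteq> (trans_elems ps i = {x, y}))"
proof -
  have i: "i \<le> N" using assms(1) by simp
  show ?thesis
    using index_of_adj_swap_less_iff[of "ps ! i" "trans_pos ps i" x y] trans_pos_step[OF assms(1)]
      perm_at[OF i] assms(2-4)
    by (simp add: trans_elems_def)
qed

lemma index_of_less_iff_swap_time:
  assumes "x \<in> ground" "y \<in> ground" "x \<noteq> y" "i \<le> N"
  shows "(index_of (ps ! i) x < index_of (ps ! i) y) =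
    ((index_of (ps ! 0) x < index_of (ps ! 0) y) = (i \<le> swap_time x y))"
  using assms(4)
proof (induction i)
  case 0
  then show ?case by simp
next
  case (Suc i)
  then have i: "i < N" by simp
  have "(trans_elems ps i = {x, y}) = (i = swap_time x y)"
    using swap_time[OF assms(1-3)] swap_time_unique[OF assms(1-3) i] by auto
  moreover have "(Suc i \<le> swap_time x y) = ((i \<le> swap_time x y) \<noteq> (i = swap_time x y))"
    by auto
  ultimately show ?case
    using index_of_step_less_iff[OF i assms(1-3)] Suc.IH[OF less_imp_le[OF i]] by argo
qed

lemma index_of_initial_left_less_right:
  assumes "i < N"
  shows "index_of (ps ! 0) (left_elem i) < index_of (ps ! 0) (right_elem i)"
proof -
  have ne: "left_elem i \<noteq> right_elem i"
    using index_of_left_elem[OF assms] index_of_right_elem[OF assms] trans_pos_step(1)[OF assms]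
    by auto
  have "swap_time (left_elem i) (right_elem i) = i"
    using swap_time_unique[OF left_elem_in_ground[OF assms] right_elem_in_ground[OF assms] ne assms]
    by (simp add: trans_elems_eq)
  then show ?thesis
    using index_of_less_iff_swap_time[OF left_elem_in_ground[OF assms] right_elem_in_ground[OF assms] ne,
        of i]
      index_of_left_elem[OF assms] index_of_right_elem[OF assms] trans_pos_step[OF assms] assms
    by simp
qed

lemma index_of_less_until_swap_time:
  assumes "x \<in> ground" "y \<in> ground" "x \<noteq> y" "i \<le> swap_time x y"
    and "index_of (ps ! 0) x < index_of (ps ! 0) y"
  shows "index_of (ps ! i) x < index_of (ps ! i) y"
  using index_of_less_iff_swap_time[OF assms(1-3)] swap_time(1)[OF assms(1-3)] assms(4,5) by simp

lemma index_of_less_after_swap_time: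
  assumes "x \<in> ground" "y \<in> ground" "x \<noteq> y" "swap_time x y < i" "i \<le> N"
    and "index_of (ps ! 0) x < index_of (ps ! 0) y"
  shows "index_of (ps ! i) y < index_of (ps ! i) x"
proof -
  have "index_of (ps ! i) x \<noteq> index_of (ps ! i) y"
    using assms(1-3) perm_at[OF assms(5)] by (metis nth_index_of)
  then show ?thesis
    using index_of_less_iff_swap_time[OF assms(1-3,5)] assms(4,6) by simp
qed

text \<open>The weight of the first p positions changes only at p-transpositions, by the weight of
  the right element minus that of the left one; sum these changes over the half-period.\<close>
lemma card_trans_pos_by_prefix_sums:
  fixes w :: "'a \<Rightarrow> int"
  assumes "p \<le> n"
    and "\<And>i. i < N \<Longrightarrow> trans_pos ps i = p \<Longrightarrow> w (right_elem i) - w (left_elem i) = of_bool (P i)"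
  shows "int (card {i. i < N \<and> trans_pos ps i = p \<and> P i}) =
    (\<Sum>j<p. w (ps ! N ! j)) - (\<Sum>j<p. w (ps ! 0 ! j))"
proof -
  define \<Phi> where "\<Phi> i = (\<Sum>j<p. w (ps ! i ! j))" for i
  have step: "\<Phi> (Suc i) - \<Phi> i = of_bool (trans_pos ps i = p \<and> P i)" if "i < N" for i
    using sum_prefix_adj_swap[of "trans_pos ps i" "ps ! i" p w] trans_pos_step[OF that]
      perm_at[of i] assms that
    by (auto simp: \<Phi>_def left_elem_def right_elem_def)
  have "int (card {i. i < N \<and> trans_pos ps i = p \<and> P i}) = (\<Sum>i<N. of_bool (trans_pos ps i = p \<and> P i))"
    by (simp add: Int_def)
  also have "\<dots> = (\<Sum>i<N. \<Phi> (Suc i) - \<Phi> i)"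
    by (simp add: step)
  also have "\<dots> = \<Phi> N - \<Phi> 0"
    by (rule sum_lessThan_telescope)
  finally show ?thesis
    by (simp add: \<Phi>_def)
qed

end

lemma nth_three_blocks:
  assumes "distinct (xs @ ys @ zs)" "length xs = m" "length ys = m" "length zs = m" "j < 3 * m"
  shows "((xs @ ys @ zs) ! j \<in> set xs) = (j div m = 0)"
    and "((xs @ ys @ zs) ! j \<in> set ys) = (j div m = 1)"
    and "((xs @ ys @ zs) ! j \<in> set zs) = (j div m = 2)"
proof -
  consider "j < m" | "m \<le> j" "j < 2 * m" | "2 * m \<le> j" by linarith
  then have "(xs @ ys @ zs) ! j \<in> (if j div m = 0 then set xs else if j div m = 1 then set ys else set zs)
    \<and> (j div m \<le> 2)"
  proof cases
    case 1
    then show ?thesis using assms(2) by (simp add: nth_append)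
  next
    case 2
    then have "j div m = 1" by (simp add: div_nat_eqI)
    then show ?thesis using 2 assms(2,3) by (auto simp: nth_append)
  next
    case 3
    then have "j div m = 2" using assms(5) by (simp add: div_nat_eqI)
    then show ?thesis using 3 assms(2-5) by (auto simp: nth_append)
  qed
  moreover have "set xs \<inter> set ys = {}" "set xs \<inter> set zs = {}" "set ys \<inter> set zs = {}"
    using assms(1) by auto
  ultimately show "((xs @ ys @ zs) ! j \<in> set xs) = (j div m = 0)"
    and "((xs @ ys @ zs) ! j \<in> set ys) = (j div m = 1)"
    and "((xs @ ys @ zs) ! j \<in> set zs) = (j div m = 2)"
    by (auto split: if_splits)
qed

locale three_decomposition =
  fixes n :: nat and ps :: "'a list list" and A B C :: "'a set"
  assumes three_decomposable: "three_decomposable n ps A B C"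
begin

sublocale half_period_seq n ps
  using three_decomposable unfolding three_decomposable_def by unfold_locales (elim conjE)

abbreviation m :: nat where "m \<equiv> n div 3"

lemma n_eq: "n = 3 * m"
proof -
  have "3 dvd n"
    using three_decomposable unfolding three_decomposable_def by (elim conjE)
  then show ?thesis by simp
qed

lemma initial_blocks:
  obtains xs ys zs where "ps ! 0 = xs @ ys @ zs" "length xs = m" "length ys = m" "length zs = m"
    "set xs = A" "set ys = B" "set zs = C"
proof -
  obtain a b c :: "nat \<Rightarrow> 'a" where
    "A = a ` {1..m}" "B = b ` {1..m}" "C = c ` {1..m}"
    "ps ! 0 = rev (map a [1..<m + 1]) @ map b [1..<m + 1] @ map c [1..<m + 1]"
    using three_decomposable unfolding three_decomposable_def by (elim conjE exE) blast
  then show ?thesis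
    by (intro that[of "rev (map a [1..<m + 1])" "map b [1..<m + 1]" "map c [1..<m + 1]"])
      (auto simp: atLeastLessThanSuc_atLeastAtMost)
qed

lemma AB_swaps_before_C_swaps:
  assumes "i < N" "i' < N" "between A B ps i" "between C (A \<union> B) ps i'"
  shows "i < i'"
proof -
  have "\<forall>i < N. \<forall>i' < N. between A B ps i \<and> between C (A \<union> B) ps i' \<longrightarrow> i < i'"
    using three_decomposable unfolding three_decomposable_def by (elim conjE)
  then show ?thesis using assms by blast
qed

lemma classes_in_ground: "A \<subseteq> ground" "B \<subseteq> ground" "C \<subseteq> ground"
  by (metis initial_blocks Un_upper1 Un_upper2 le_supI2 set_append)+

lemma card_classes: "card A = m" "card B = m" "card C = m"
proof -
  obtain xs ys zs where "ps ! 0 = xs @ ys @ zs" "length xs = m" "length ys = m" "length zs = m"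
    "set xs = A" "set ys = B" "set zs = C"
    by (rule initial_blocks)
  moreover have "distinct (ps ! 0)"
    using perm_at(1) by simp
  ultimately show "card A = m" "card B = m" "card C = m"
    by (metis distinct_append distinct_card)+
qed

definition block_of :: "'a \<Rightarrow> nat" where
  "block_of x = index_of (ps ! 0) x div m"

lemma mem_classes_iff:
  assumes "x \<in> ground"
  shows "(x \<in> A) = (block_of x = 0)" "(x \<in> B) = (block_of x = 1)" "(x \<in> C) = (block_of x = 2)"
proof -
  obtain xs ys zs where blocks: "ps ! 0 = xs @ ys @ zs" "length xs = m" "length ys = m" "length zs = m"
    "set xs = A" "set ys = B" "set zs = C"
    by (rule initial_blocks)
  have d: "distinct (ps ! 0)" and l: "length (ps ! 0) = n"
    using perm_at(1,2) by simp_all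
  have "index_of (ps ! 0) x < 3 * m"
    using index_of_less_length[OF d assms] l n_eq by simp
  note nth_three_blocks[OF d[unfolded blocks(1)] blocks(2-4) this[unfolded blocks(1)]]
  then show "(x \<in> A) = (block_of x = 0)" "(x \<in> B) = (block_of x = 1)" "(x \<in> C) = (block_of x = 2)"
    using nth_index_of[OF d assms] unfolding block_of_def blocks by simp_all
qed

lemma block_of_le_2:
  assumes "x \<in> ground"
  shows "block_of x \<le> 2"
proof -
  have "index_of (ps ! 0) x < 3 * m"
    using index_of_less_length[of "ps ! 0" x] perm_at(1,2)[of 0] n_eq assms by simp
  then have "block_of x < 3"
    unfolding block_of_def by (rule less_mult_imp_div_less)
  then show ?thesis by simp
qed

lemma block_of_initial_nth: "j < n \<Longrightarrow> block_of (ps ! 0 ! j) = j div m"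
  using index_of_nth[of "ps ! 0" j] perm_at(1,2)[of 0] by (simp add: block_of_def)

lemma index_of_initial_less_of_block_of_less:
  "block_of x < block_of y \<Longrightarrow> index_of (ps ! 0) x < index_of (ps ! 0) y"
  unfolding block_of_def by (meson div_le_mono not_le)

lemma block_of_left_le_right: "i < N \<Longrightarrow> block_of (left_elem i) \<le> block_of (right_elem i)"
  using index_of_initial_left_less_right unfolding block_of_def by (simp add: div_le_mono less_imp_le)

lemma bichromatic_iff_block_of_less:
  assumes "i < N"
  shows "bichromatic A B C ps i = (block_of (left_elem i) < block_of (right_elem i))"
  using mem_classes_iff[OF left_elem_in_ground[OF assms]] mem_classes_iff[OF right_elem_in_ground[OF assms]]
    block_of_le_2[OF right_elem_in_ground[OF assms]] block_of_left_le_right[OF assms]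
  by (auto simp: bichromatic_def trans_elems_eq)

lemma card_A_Un_B: "card (A \<union> B) = 2 * m"
proof -
  have "A \<inter> B = {}"
    using mem_classes_iff classes_in_ground by fastforce
  then show ?thesis
    using card_classes by (simp add: card_Un_disjoint finite_subset[OF classes_in_ground(1)]
        finite_subset[OF classes_in_ground(2)])
qed

text \<open>At the end of the half-period every pair has been swapped, so the C-elements, which started
  behind all others, now occupy the first m positions.\<close>
lemma final_nth_in_C_iff:
  assumes "j < n"
  shows "(ps ! N ! j \<in> C) = (j < m)"
proof -
  let ?z = "ps ! N ! j" and ?idx = "index_of (ps ! N)"
  have d: "distinct (ps ! N)" and l: "length (ps ! N) = n" and s: "set (ps ! N) = ground"
    using perm_at[of N] by simp_all
  have z: "?z \<in> ground" "?idx ?z = j"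
    using assms l nth_in_ground index_of_nth[OF d] by simp_all
  have C_first: "?idx y < ?idx x" if "x \<in> A \<union> B" "y \<in> C" for x y
  proof -
    have xy: "x \<in> ground" "y \<in> ground"
      using that classes_in_ground by auto
    have "block_of x < block_of y"
      using that mem_classes_iff[OF xy(1)] mem_classes_iff[OF xy(2)] by auto
    moreover have ne: "x \<noteq> y"
      using calculation by auto
    ultimately show ?thesis
      using index_of_less_after_swap_time[OF xy ne swap_time(1)[OF xy ne] order.refl]
        index_of_initial_less_of_block_of_less by blast
  qed
  show ?thesis
  proof
    assume "?z \<in> C"
    then have "card (A \<union> B) + ?idx ?z < length (ps ! N)"
      using C_first classes_in_ground s by (intro card_add_index_of_less[OF d]) auto
    then show "j < m"
      using card_A_Un_B z l n_eq by simp
  next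
    assume "j < m"
    show "?z \<in> C"
    proof (rule ccontr)
      assume "?z \<notin> C"
      then have "?z \<in> A \<union> B"
        using z(1) mem_classes_iff[OF z(1)] block_of_le_2[OF z(1)] by auto
      then have "card C \<le> ?idx ?z"
        using C_first classes_in_ground s by (intro card_le_index_of[OF d]) auto
      then show False
        using \<open>j < m\<close> card_classes z by simp
    qed
  qed
qed

text \<open>A C-element can only overtake A-elements after all A-B swaps are done; by then the m
  elements of B stand in front of the A-element, so an A-C swap cannot happen at position k \<le> m.\<close>
lemma no_A_C_swap_at_front:
  assumes "i < N" "trans_pos ps i \<le> m" "left_elem i \<in> A"
  shows "right_elem i \<notin> C"
proof
  assume r: "right_elem i \<in> C"
  let ?l = "left_elem i" and ?idx = "index_of (ps ! i)"
  have l: "?l \<in> ground" "block_of ?l = 0"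
    using assms(3) classes_in_ground mem_classes_iff by auto
  have "?idx y < ?idx ?l" if y: "y \<in> B" for y
  proof -
    have yg: "y \<in> ground" "block_of y = 1"
      using y classes_in_ground mem_classes_iff by auto
    then have ne: "?l \<noteq> y"
      using l by auto
    have "swap_time ?l y < i"
    proof (rule AB_swaps_before_C_swaps[OF swap_time(1)[OF l(1) yg(1) ne] assms(1)])
      show "between A B ps (swap_time ?l y)"
        using swap_time(2)[OF l(1) yg(1) ne] assms(3) y unfolding between_def by blast
      show "between C (A \<union> B) ps i"
        using r assms(3) unfolding between_def trans_elems_eq by blast
    qed
    then show ?thesis
      using index_of_less_after_swap_time[OF l(1) yg(1) ne _ less_imp_le[OF assms(1)]]
        index_of_initial_less_of_block_of_less l yg by simp
  qed
  then have "card B \<le> ?idx ?l"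
    using classes_in_ground perm_at(3)[of i] assms(1)
    by (intro card_le_index_of) (auto simp: perm_at(1)[of i])
  then show False
    using card_classes index_of_left_elem[OF assms(1)] trans_pos_step(1)[OF assms(1)] assms(2) by simp
qed

text \<open>Symmetrically, as long as an A-B swap is still to come no C-element has overtaken the
  B-element, so an A-B swap cannot happen at position n - k with k \<le> m.\<close>
lemma no_A_B_swap_at_back:
  assumes "i < N" "n - m \<le> trans_pos ps i" "left_elem i \<in> A"
  shows "right_elem i \<notin> B"
proof
  assume r: "right_elem i \<in> B"
  let ?r = "right_elem i" and ?idx = "index_of (ps ! i)"
  have rg: "?r \<in> ground" "block_of ?r = 1"
    using r classes_in_ground mem_classes_iff by auto
  have "?idx ?r < ?idx y" if y: "y \<in> C" for y
  proof -
    have yg: "y \<in> ground" "block_of y = 2"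
      using y classes_in_ground mem_classes_iff by auto
    then have ne: "?r \<noteq> y"
      using rg by auto
    have "i < swap_time ?r y"
    proof (rule AB_swaps_before_C_swaps[OF assms(1) swap_time(1)[OF rg(1) yg(1) ne]])
      show "between A B ps i"
        using r assms(3) unfolding between_def trans_elems_eq by blast
      show "between C (A \<union> B) ps (swap_time ?r y)"
        using swap_time(2)[OF rg(1) yg(1) ne] r y unfolding between_def by blast
    qed
    then show ?thesis
      using index_of_less_until_swap_time[OF rg(1) yg(1) ne]
        index_of_initial_less_of_block_of_less rg yg by simp
  qed
  then have "card C + ?idx ?r < length (ps ! i)"
    using classes_in_ground perm_at(3)[of i] assms(1) rg(1)
    by (intro card_add_index_of_less) (auto simp: perm_at(1)[of i])
  then show False
    using card_classes index_of_right_elem[OF assms(1)] perm_at(2)[of i] assms(1,2) n_eq by simp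
qed

lemma card_bichromatic_front:
  assumes "k \<le> m"
  shows "card {i. i < N \<and> trans_pos ps i = k \<and> bichromatic A B C ps i} = 2 * k"
proof -
  have "int (card {i. i < N \<and> trans_pos ps i = k \<and> bichromatic A B C ps i}) =
      (\<Sum>j<k. int (block_of (ps ! N ! j))) - (\<Sum>j<k. int (block_of (ps ! 0 ! j)))"
  proof (rule card_trans_pos_by_prefix_sums)
    show "k \<le> n"
      using assms n_eq by simp
    fix i assume i: "i < N" "trans_pos ps i = k"
    let ?l = "left_elem i" and ?r = "right_elem i"
    have "\<not> (block_of ?l = 0 \<and> block_of ?r = 2)"
      using no_A_C_swap_at_front[OF i(1)] i(2) assms mem_classes_iff(1)[OF left_elem_in_ground[OF i(1)]]
        mem_classes_iff(3)[OF right_elem_in_ground[OF i(1)]] by auto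
    then show "int (block_of ?r) - int (block_of ?l) = of_bool (bichromatic A B C ps i)"
      using bichromatic_iff_block_of_less[OF i(1)] block_of_left_le_right[OF i(1)]
        block_of_le_2[OF right_elem_in_ground[OF i(1)]] by auto
  qed
  also have "(\<Sum>j<k. int (block_of (ps ! N ! j))) = (\<Sum>j<k. 2)"
    using final_nth_in_C_iff mem_classes_iff(3)[OF nth_in_ground] assms n_eq
    by (intro sum.cong) auto
  also have "(\<Sum>j<k. int (block_of (ps ! 0 ! j))) = (\<Sum>j<k. 0)"
    using block_of_initial_nth assms n_eq by (intro sum.cong) auto
  finally show ?thesis by simp
qed

lemma card_bichromatic_back:
  assumes "k \<le> m"
  shows "card {i. i < N \<and> trans_pos ps i = n - k \<and> bichromatic A B C ps i} = k"
proof -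
  have "int (card {i. i < N \<and> trans_pos ps i = n - k \<and> bichromatic A B C ps i}) =
      (\<Sum>j<n - k. of_bool (ps ! N ! j \<in> C)) - (\<Sum>j<n - k. of_bool (ps ! 0 ! j \<in> C))"
  proof (rule card_trans_pos_by_prefix_sums)
    fix i assume i: "i < N" "trans_pos ps i = n - k"
    let ?l = "left_elem i" and ?r = "right_elem i"
    note l = mem_classes_iff[OF left_elem_in_ground[OF i(1)]]
    note r = mem_classes_iff[OF right_elem_in_ground[OF i(1)]]
    have "\<not> (block_of ?l = 0 \<and> block_of ?r = 1)"
      using no_A_B_swap_at_back[OF i(1)] i(2) diff_le_mono2[OF assms] l(1) r(2) by auto
    then show "of_bool (?r \<in> C) - of_bool (?l \<in> C) = (of_bool (bichromatic A B C ps i) :: int)"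
      using bichromatic_iff_block_of_less[OF i(1)] block_of_left_le_right[OF i(1)]
        block_of_le_2[OF right_elem_in_ground[OF i(1)]] l(3) r(3) by auto
  qed simp
  also have "(\<Sum>j<n - k. of_bool (ps ! N ! j \<in> C)) = (\<Sum>j<n - k. of_bool (j < m) :: int)"
    using final_nth_in_C_iff by (intro sum.cong) auto
  also have "\<dots> = int m"
  proof -
    have "{j. j < n - k \<and> j < m} = {..<m}"
      using assms n_eq by auto
    then show ?thesis by (simp add: Int_def)
  qed
  also have "(\<Sum>j<n - k. of_bool (ps ! 0 ! j \<in> C)) = (\<Sum>j<n - k. of_bool (2 * m \<le> j) :: int)"
  proof (intro sum.cong refl)
    fix j assume "j \<in> {..<n - k}"
    then have "j < 3 * m" using n_eq by simp
    then have "(j div m = 2) = (2 * m \<le> j)"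
      using div_less_iff_less_mult[of m j 2] div_less_iff_less_mult[of m j 3] by (cases "m = 0") auto
    then show "of_bool (ps ! 0 ! j \<in> C) = (of_bool (2 * m \<le> j) :: int)"
      using mem_classes_iff(3)[OF nth_in_ground] block_of_initial_nth \<open>j < 3 * m\<close> n_eq by auto
  qed
  also have "\<dots> = int (m - k)"
  proof -
    have "{j. j < n - k \<and> 2 * m \<le> j} = {2 * m..<n - k}"
      by auto
    then show ?thesis
      using assms n_eq by (simp add: Int_def)
  qed
  finally show ?thesis
    using assms by simp
qed

theorem N_bi_eq:
  assumes "1 \<le> k" "k \<le> m"
  shows "N_bi n k A B C ps = 3 * k"
proof -
  let ?front = "{i. i < N \<and> trans_pos ps i = k \<and> bichromatic A B C ps i}"
  let ?back = "{i. i < N \<and> trans_pos ps i = n - k \<and> bichromatic A B C ps i}"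
  have "{i. i < N \<and> k_critical n k ps i \<and> bichromatic A B C ps i} = ?front \<union> ?back"
    unfolding k_critical_def by auto
  moreover have "?front \<inter> ?back = {}"
    using assms n_eq by auto
  ultimately have "N_bi n k A B C ps = card ?front + card ?back"
    unfolding N_bi_def by (simp add: card_Un_disjoint)
  then show ?thesis
    using card_bichromatic_front[OF assms(2)] card_bichromatic_back[OF assms(2)] by simp
qed

end

theorem corollary1:
  fixes ps :: "'a list list" and A B C :: "'a set" and k :: nat
  assumes "three_decomposable 30 ps A B C"
    and "1 \<le> k" and "k \<le> 10"
  shows "N_bi 30 k A B C ps = 3 * k"
proof -
  interpret three_decomposition 30 ps A B C
    by unfold_locales (fact assms(1))
  show ?thesis
    using N_bi_eq assms(2,3) by simp
qed

end
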